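(* Let $\mathcal{P}$ be a database program and $\Omega$ a sketch. Assume the oracle $\textsf{Verify}$ decides equivalence exactly (it returns true on $(\mathcal{P},\mathcal{P}')$ iff $\mathcal{P}\simeq\mathcal{P}'$) and, whenever $\mathcal{P}\not\simeq\mathcal{P}'$, supplies a minimum failing input. If there exists a completion $\mathcal{P}'\in\gamma(\Omega)$ with $\mathcal{P}'\simeq\mathcal{P}$, then $\textsc{CompleteSketch}(\Omega,\mathcal{P})$ returns (not $\bot$) a program $\mathcal{P}''\in\gamma(\Omega)$ with $\mathcal{P}''\simeq\mathcal{P}$.
   Context: A database program is a finite set of named functions, each either an update function (a sequence of insert/delete/update statements on database tables, parameterized by arguments) or a query function (a relational-algebra query parameterized by arguments). An invocation sequence is $\omega=(f_1,\sigma_1);\dots;(f_k,\sigma_k)$ where $f_1,\dots,f_{k-1}$ are update functions, $f_k$ is a query function, and $\sigma_i$ are arguments; $[\![\mathcal{P}]\!]_\omega$ denotes the query result of executing $\omega$ on $\mathcal{P}$ from the empty database. $\mathcal{P}\simeq\mathcal{P}'$ iff $[\![\mathcal{P}]\!]_\omega=[\![\mathcal{P}']\!]_\omega$ for all invocation sequences $\omega$. A minimum failing input for $\mathcal{P},\mathcal{P}'$ is an invocation sequence $\omega$ of minimal length with $[\![\mathcal{P}]\!]_\omega\neq[\![\mathcal{P}']\!]_\omega$. A sketch $\Omega$ is a database program (with the same function names and signatures as $\mathcal{P}$) in which finitely many holes $\textbf{??}_1,\dots,\textbf{??}_m$ occur, each hole $\textbf{??}_i$ lying inside the body of exactly one function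 and having a finite domain $\{e_i^1,\dots,e_i^{n_i}\}$ of candidate constants (tables, join chains, attributes, table lists, etc.). A completion of $\Omega$ is $\Omega[\vec e/\vec{\textbf{??}}]$ for a choice $e_i\in\{e_i^1,\dots,e_i^{n_i}\}$ for each $i$; $\gamma(\Omega)$ is the set of completions. The body of each function in a completion depends only on the values assigned to the holes occurring in that function. $\textsc{CompleteSketch}(\Omega,\mathcal{P})$: introduce Boolean variables $b_i^j$ ($b_i^j$ true iff $\textbf{??}_i$ is filled with $e_i^j$) and set $\Psi:=\bigwedge_{i=1}^m\oplus(b_i^1,\dots,b_i^{n_i})$, where $\oplus$ means exactly one argument is true. While $\Psi$ is satisfiable: take a model $\mathcal{M}$ of $\Psi$, let $\mathcal{P}'$ be the completion it encodes; if $\textsf{Verify}(\mathcal{P},\mathcal{P}')$ returns true, return $\mathcal{P}'$; otherwise obtain a minimum failing input $\omega$, let $H$ be the set of indices of holes occurring in the functions invoked in $\omega$, and set $\Psi:=\Psi\land\neg\bigwedge_{i\in H}b_i^{j_i}$ where $j_i$ is the index with $\mathcal{M}(b_i^{j_i})=\text{true}$. When $\Psi$ becomes unsatisfiable, return $\bot$. *)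

theory Defs
  imports Main
begin

text \<open>
  Update functions have names of type 'fu and
  bodies of type 'u (a sequence of insert/delete/update statements); query functions
  have names of type 'fq and bodies of type 'q (a relational-algebra query).
  The meaning of statements/queries is given by denotation functions
  updDen :: 'u => 'arg => 'db => 'db and qryDen :: 'q => 'arg => 'db => 'res,
  and execution starts from the empty database emp.
  A program assigns a body to every function name (update and query functions
  are kept apart, so a program and its completions share names and signatures).
\<close>

type_synonym ('fu, 'fq, 'u, 'q) program = "('fu \<Rightarrow> 'u) \<times> ('fq \<Rightarrow> 'q)"

text \<open>Invocation sequence (f1,s1);...;(f(k-1),s(k-1));(fk,sk): the update invocations
  and the final query invocation.\<close>
type_synonym ('fu, 'fq, 'arg) invseq = "('fu \<times> 'arg) list \<times> ('fq \<times> 'arg)"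

definition inv_length :: "('fu, 'fq, 'arg) invseq \<Rightarrow> nat" where
  "inv_length \<omega> = length (fst \<omega>) + 1"

definition exec ::
  "('u \<Rightarrow> 'arg \<Rightarrow> 'db \<Rightarrow> 'db) \<Rightarrow> ('q \<Rightarrow> 'arg \<Rightarrow> 'db \<Rightarrow> 'res) \<Rightarrow> 'db \<Rightarrow>
   ('fu, 'fq, 'u, 'q) program \<Rightarrow> ('fu, 'fq, 'arg) invseq \<Rightarrow> 'res" where
  "exec updDen qryDen emp P \<omega> =
     qryDen (snd P (fst (snd \<omega>))) (snd (snd \<omega>))
       (fold (\<lambda>(f, s) d. updDen (fst P f) s d) (fst \<omega>) emp)"

definition prog_equiv where
  "prog_equiv updDen qryDen emp P P' \<longleftrightarrow>
     (\<forall>\<omega>. exec updDen qryDen emp P \<omega> = exec updDen qryDen emp P' \<omega>)"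

definition is_min_failing where
  "is_min_failing updDen qryDen emp P P' \<omega> \<longleftrightarrow>
     exec updDen qryDen emp P \<omega> \<noteq> exec updDen qryDen emp P' \<omega> \<and>
     (\<forall>\<omega>'. inv_length \<omega>' < inv_length \<omega> \<longrightarrow>
         exec updDen qryDen emp P \<omega>' = exec updDen qryDen emp P' \<omega>')"

text \<open>
  Holes are numbered 0..<m; hole i has the finite candidate domain
  cand i = [e_i^1, ..., e_i^{n_i}] (0-based indices j < length (cand i)) and lies in the
  body of function owner i.
\<close>

definition fill ::
  "('fu \<Rightarrow> (nat \<Rightarrow> 'e) \<Rightarrow> 'u) \<Rightarrow> ('fq \<Rightarrow> (nat \<Rightarrow> 'e) \<Rightarrow> 'q) \<Rightarrow> (nat \<Rightarrow> 'e) \<Rightarrow>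
   ('fu, 'fq, 'u, 'q) program" where
  "fill skU skQ a = (\<lambda>f. skU f a, \<lambda>g. skQ g a)"

definition sketch_local ::
  "nat \<Rightarrow> (nat \<Rightarrow> 'fu + 'fq) \<Rightarrow> ('fu \<Rightarrow> (nat \<Rightarrow> 'e) \<Rightarrow> 'u) \<Rightarrow> ('fq \<Rightarrow> (nat \<Rightarrow> 'e) \<Rightarrow> 'q) \<Rightarrow> bool"
  where
  "sketch_local m owner skU skQ \<longleftrightarrow>
     (\<forall>f a a'. (\<forall>i<m. owner i = Inl f \<longrightarrow> a i = a' i) \<longrightarrow> skU f a = skU f a') \<and>
     (\<forall>g a a'. (\<forall>i<m. owner i = Inr g \<longrightarrow> a i = a' i) \<longrightarrow> skQ g a = skQ g a')"

definition completions where
  "completions m cand skU skQ =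
     {fill skU skQ a | a. \<forall>i<m. a i \<in> set (cand i)}"

text \<open>Boolean variable b_i^j is the pair (i, j); a formula is represented by its set of
  models (a predicate on valuations).\<close>
type_synonym valuation = "nat \<times> nat \<Rightarrow> bool"
type_synonym formula = "valuation \<Rightarrow> bool"

definition psi0 :: "nat \<Rightarrow> (nat \<Rightarrow> 'e list) \<Rightarrow> formula" where
  "psi0 m cand = (\<lambda>v. \<forall>i<m. \<exists>!j. j < length (cand i) \<and> v (i, j))"

definition sel :: "(nat \<Rightarrow> 'e list) \<Rightarrow> valuation \<Rightarrow> nat \<Rightarrow> nat" where
  "sel cand M i = (THE j. j < length (cand i) \<and> M (i, j))"

definition decode where
  "decode cand skU skQ M = fill skU skQ (\<lambda>i. cand i ! sel cand M i)"

definition invoked_holes :: "nat \<Rightarrow> (nat \<Rightarrow> 'fu + 'fq) \<Rightarrow> ('fu, 'fq, 'arg) invseq \<Rightarrow> nat set" where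
  "invoked_holes m owner \<omega> =
     {i. i < m \<and> owner i \<in> Inl ` fst ` set (fst \<omega>) \<union> {Inr (fst (snd \<omega>))}}"

definition block :: "(nat \<Rightarrow> 'e list) \<Rightarrow> valuation \<Rightarrow> nat set \<Rightarrow> formula \<Rightarrow> formula" where
  "block cand M H \<Psi> = (\<lambda>v. \<Psi> v \<and> \<not> (\<forall>i\<in>H. v (i, sel cand M i)))"

text \<open>
  Runs of CompleteSketch.  pick is the SAT solver (returns a model of a satisfiable
  formula), verify the equivalence oracle, mfi the oracle supplying failing inputs.
  cs_run ... Psi r  means: the loop started with formula Psi returns r
  (None = bottom, Some P' = the completion P').
\<close>
inductive cs_run for updDen qryDen emp m owner cand skU skQ pick verify mfi P where
  unsat: "\<not> (\<exists>v. \<Psi> v) \<Longrightarrow>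
     cs_run updDen qryDen emp m owner cand skU skQ pick verify mfi P \<Psi> None"
| found: "\<exists>v. \<Psi> v \<Longrightarrow> verify P (decode cand skU skQ (pick \<Psi>)) \<Longrightarrow>
     cs_run updDen qryDen emp m owner cand skU skQ pick verify mfi P \<Psi>
       (Some (decode cand skU skQ (pick \<Psi>)))"
| refine: "\<exists>v. \<Psi> v \<Longrightarrow> \<not> verify P (decode cand skU skQ (pick \<Psi>)) \<Longrightarrow>
     cs_run updDen qryDen emp m owner cand skU skQ pick verify mfi P
       (block cand (pick \<Psi>)
          (invoked_holes m owner (mfi P (decode cand skU skQ (pick \<Psi>)))) \<Psi>) r \<Longrightarrow>
     cs_run updDen qryDen emp m owner cand skU skQ pick verify mfi P \<Psi> r"

definition complete_sketch_returns where
  "complete_sketch_returns updDen qryDen emp m owner cand skU skQ pick verify mfi P r \<longleftrightarrow>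
     cs_run updDen qryDen emp m owner cand skU skQ pick verify mfi P (psi0 m cand) r"

end

theory Submission
  imports Defs
begin

text \<open>
  Fix an assignment a whose completion is equivalent to P and the valuation encoding it.
  This valuation satisfies every formula of the loop: a blocking clause built from a
  failing input \<omega> of a candidate M would exclude it only if a agreed with M on the holes
  of the functions invoked in \<omega>; but then both completions would compute the same result
  on \<omega>, whereas that of a agrees with P and that of M does not.  Hence the loop never
  returns \<bottom>, and it terminates because every blocking clause removes the hole selection
  of the current model from the finitely many selections still allowed.
\<close>

lemma sel_psi0:
  assumes "psi0 m cand v" "i < m"
  shows "sel cand v i < length (cand i) \<and> v (i, sel cand v i)"
proof -
  have "\<exists>!j. j < length (cand i) \<and> v (i, j)" using assms by (auto simp: psi0_def)
  from theI'[OF this] show ?thesis by (simp add: sel_def)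
qed

lemma decode_in_completions:
  assumes "psi0 m cand M"
  shows "decode cand skU skQ M \<in> completions m cand skU skQ"
  using sel_psi0[OF assms] unfolding decode_def completions_def by auto

lemma prog_equiv_sym:
  "prog_equiv updDen qryDen emp P P' \<longleftrightarrow> prog_equiv updDen qryDen emp P' P"
  unfolding prog_equiv_def by metis

lemma exec_fill_cong:
  assumes local: "sketch_local m owner skU skQ"
    and agree: "\<forall>i\<in>invoked_holes m owner \<omega>. a i = b i"
  shows "exec updDen qryDen emp (fill skU skQ a) \<omega> = exec updDen qryDen emp (fill skU skQ b) \<omega>"
proof -
  have query: "skQ (fst (snd \<omega>)) a = skQ (fst (snd \<omega>)) b"
    using local agree unfolding sketch_local_def invoked_holes_def by blast
  have update: "skU f a = skU f b" if "(f, s) \<in> set (fst \<omega>)" for f s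
  proof -
    have "\<forall>i<m. owner i = Inl f \<longrightarrow> a i = b i"
      using agree that unfolding invoked_holes_def by force
    thus ?thesis using local unfolding sketch_local_def by blast
  qed
  have "fold (\<lambda>(f, s) d. updDen (skU f a) s d) (fst \<omega>) emp =
        fold (\<lambda>(f, s) d. updDen (skU f b) s d) (fst \<omega>) emp"
    by (rule fold_cong) (auto simp: update)
  thus ?thesis using query by (simp add: exec_def fill_def)
qed

definition selections :: "nat \<Rightarrow> (nat \<Rightarrow> 'e list) \<Rightarrow> formula \<Rightarrow> nat list set" where
  "selections m cand \<Psi> = (\<lambda>v. map (sel cand v) [0..<m]) ` {v. \<Psi> v \<and> psi0 m cand v}"

lemma finite_selections: "finite (selections m cand \<Psi>)"
proof -
  let ?K = "\<Sum>i<m. length (cand i)"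
  have "sel cand v i < ?K" if "psi0 m cand v" "i < m" for v i
  proof -
    have "length (cand i) \<le> ?K" using \<open>i < m\<close> by (intro member_le_sum) auto
    thus ?thesis using sel_psi0[OF that] by linarith
  qed
  hence "selections m cand \<Psi> \<subseteq> {xs. set xs \<subseteq> {..<?K} \<and> length xs = m}"
    unfolding selections_def by auto
  thus ?thesis by (rule finite_subset) (simp add: finite_lists_length_eq)
qed

lemma card_selections_block_less:
  assumes "\<Psi> M" "psi0 m cand M" "H \<subseteq> {..<m}"
  shows "card (selections m cand (block cand M H \<Psi>)) < card (selections m cand \<Psi>)"
proof (rule psubset_card_mono[OF finite_selections])
  let ?selM = "map (sel cand M) [0..<m]"
  have "?selM \<notin> selections m cand (block cand M H \<Psi>)"
  proof
    assume "?selM \<in> selections m cand (block cand M H \<Psi>)"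
    then obtain v where v: "block cand M H \<Psi> v" "psi0 m cand v"
      and same: "map (sel cand v) [0..<m] = ?selM"
      unfolding selections_def by auto
    have "v (i, sel cand M i)" if "i \<in> H" for i
    proof -
      have "i < m" using that assms(3) by auto
      hence "sel cand v i = sel cand M i" using same by simp
      thus ?thesis using sel_psi0[OF v(2) \<open>i < m\<close>] by simp
    qed
    thus False using v(1) by (simp add: block_def)
  qed
  moreover have "?selM \<in> selections m cand \<Psi>"
    using assms unfolding selections_def by blast
  moreover have "selections m cand (block cand M H \<Psi>) \<subseteq> selections m cand \<Psi>"
    unfolding selections_def block_def by auto
  ultimately show "selections m cand (block cand M H \<Psi>) \<subset> selections m cand \<Psi>"
    by blast
qed

text \<open>Candidate lists may contain duplicates; the first index of each value is chosen.\<close>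

definition encode :: "(nat \<Rightarrow> 'e list) \<Rightarrow> (nat \<Rightarrow> 'e) \<Rightarrow> valuation" where
  "encode cand a = (\<lambda>(i, j). j = (LEAST k. cand i ! k = a i))"

lemma least_index_of_member:
  assumes "x \<in> set xs"
  shows "(LEAST k. xs ! k = x) < length xs \<and> xs ! (LEAST k. xs ! k = x) = x"
proof -
  obtain k where k: "k < length xs" "xs ! k = x"
    using assms by (auto simp: in_set_conv_nth)
  have "(LEAST k. xs ! k = x) \<le> k" using k(2) by (rule Least_le)
  moreover have "xs ! (LEAST k. xs ! k = x) = x" using k(2) by (rule LeastI)
  ultimately show ?thesis using k(1) by linarith
qed

lemma psi0_encode:
  assumes "\<forall>i<m. a i \<in> set (cand i)"
  shows "psi0 m cand (encode cand a)"
  unfolding psi0_def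
proof (intro allI impI)
  fix i assume "i < m"
  hence "(LEAST k. cand i ! k = a i) < length (cand i)"
    using least_index_of_member[of "a i" "cand i"] assms by blast
  thus "\<exists>!j. j < length (cand i) \<and> encode cand a (i, j)"
    unfolding encode_def by auto
qed

lemma decode_agrees_with_encoded:
  assumes "a i \<in> set (cand i)" "encode cand a (i, sel cand M i)"
  shows "cand i ! sel cand M i = a i"
proof -
  have "sel cand M i = (LEAST k. cand i ! k = a i)"
    using assms(2) unfolding encode_def by simp
  thus ?thesis using least_index_of_member[OF assms(1)] by (simp only:)
qed

locale realizable_sketch =
  fixes updDen :: "'u \<Rightarrow> 'arg \<Rightarrow> 'db \<Rightarrow> 'db"
    and qryDen :: "'q \<Rightarrow> 'arg \<Rightarrow> 'db \<Rightarrow> 'res"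
    and emp :: 'db
    and P :: "('fu, 'fq, 'u, 'q) program"
    and m :: nat
    and owner :: "nat \<Rightarrow> 'fu + 'fq"
    and cand :: "nat \<Rightarrow> 'e list"
    and skU :: "'fu \<Rightarrow> (nat \<Rightarrow> 'e) \<Rightarrow> 'u"
    and skQ :: "'fq \<Rightarrow> (nat \<Rightarrow> 'e) \<Rightarrow> 'q"
    and pick :: "formula \<Rightarrow> valuation"
    and verify :: "('fu, 'fq, 'u, 'q) program \<Rightarrow> ('fu, 'fq, 'u, 'q) program \<Rightarrow> bool"
    and mfi :: "('fu, 'fq, 'u, 'q) program \<Rightarrow> ('fu, 'fq, 'u, 'q) program \<Rightarrow> ('fu, 'fq, 'arg) invseq"
    and a :: "nat \<Rightarrow> 'e"
  assumes local: "sketch_local m owner skU skQ"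
    and pick_model: "\<And>\<Psi>. (\<exists>v. \<Psi> v) \<Longrightarrow> \<Psi> (pick \<Psi>)"
    and verify_exact: "\<And>P'. verify P P' \<longleftrightarrow> prog_equiv updDen qryDen emp P P'"
    and mfi_min: "\<And>P'. \<not> prog_equiv updDen qryDen emp P P' \<Longrightarrow>
                     is_min_failing updDen qryDen emp P P' (mfi P P')"
    and a_cand: "\<forall>i<m. a i \<in> set (cand i)"
    and a_equiv: "prog_equiv updDen qryDen emp (fill skU skQ a) P"
begin

abbreviation run :: "formula \<Rightarrow> ('fu, 'fq, 'u, 'q) program option \<Rightarrow> bool" where
  "run \<equiv> cs_run updDen qryDen emp m owner cand skU skQ pick verify mfi P"

abbreviation candidate :: "formula \<Rightarrow> ('fu, 'fq, 'u, 'q) program" where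
  "candidate \<Psi> \<equiv> decode cand skU skQ (pick \<Psi>)"

abbreviation refined :: "formula \<Rightarrow> formula" where
  "refined \<Psi> \<equiv> block cand (pick \<Psi>) (invoked_holes m owner (mfi P (candidate \<Psi>))) \<Psi>"

text \<open>Instantiated explicitly: otherwise resolution must unify the non-pattern
  application of the schematic verifier to the schematic program, which diverges.\<close>

lemmas run_intros = cs_run.intros
  [where updDen = updDen and qryDen = qryDen and emp = emp and m = m and owner = owner
     and cand = cand and skU = skU and skQ = skQ and pick = pick and verify = verify
     and mfi = mfi and P = P]

definition admissible :: "formula \<Rightarrow> bool" where
  "admissible \<Psi> \<longleftrightarrow> (\<forall>v. \<Psi> v \<longrightarrow> psi0 m cand v) \<and> \<Psi> (encode cand a)"

lemma admissible_psi0: "admissible (psi0 m cand)"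
  using psi0_encode[OF a_cand] by (simp add: admissible_def)

lemma admissible_pick:
  assumes "admissible \<Psi>"
  shows "\<Psi> (pick \<Psi>)" "psi0 m cand (pick \<Psi>)"
  using assms pick_model unfolding admissible_def by blast+

lemma admissible_refined:
  assumes adm: "admissible \<Psi>" and rejected: "\<not> verify P (candidate \<Psi>)"
  shows "admissible (refined \<Psi>)"
proof -
  let ?M = "pick \<Psi>" and ?\<omega> = "mfi P (candidate \<Psi>)"
  have "\<not> prog_equiv updDen qryDen emp P (candidate \<Psi>)"
    using rejected verify_exact by blast
  \<comment> \<open>only the failure of the input is needed, not its minimality\<close>
  hence fail: "exec updDen qryDen emp P ?\<omega> \<noteq> exec updDen qryDen emp (candidate \<Psi>) ?\<omega>"
    using mfi_min unfolding is_min_failing_def by blast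
  have "\<not> (\<forall>i\<in>invoked_holes m owner ?\<omega>. encode cand a (i, sel cand ?M i))"
  proof
    assume "\<forall>i\<in>invoked_holes m owner ?\<omega>. encode cand a (i, sel cand ?M i)"
    hence "\<forall>i\<in>invoked_holes m owner ?\<omega>. cand i ! sel cand ?M i = a i"
      using a_cand decode_agrees_with_encoded unfolding invoked_holes_def by blast
    hence "exec updDen qryDen emp (candidate \<Psi>) ?\<omega> = exec updDen qryDen emp (fill skU skQ a) ?\<omega>"
      unfolding decode_def by (rule exec_fill_cong[OF local])
    also have "\<dots> = exec updDen qryDen emp P ?\<omega>"
      using a_equiv unfolding prog_equiv_def by blast
    finally show False using fail by simp
  qed
  hence "refined \<Psi> (encode cand a)"
    using adm unfolding admissible_def block_def by blast
  moreover have "psi0 m cand v" if "refined \<Psi> v" for v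
    using that adm unfolding admissible_def block_def by blast
  ultimately show ?thesis unfolding admissible_def by blast
qed

lemma run_exists:
  assumes "admissible \<Psi>"
  shows "\<exists>r. run \<Psi> r"
  using assms
proof (induction "card (selections m cand \<Psi>)" arbitrary: \<Psi> rule: less_induct)
  case less
  have sat: "\<exists>v. \<Psi> v" using less.prems unfolding admissible_def by blast
  show ?case
  proof (cases "verify P (candidate \<Psi>)")
    case True
    have "run \<Psi> (Some (candidate \<Psi>))" using sat True by (rule run_intros(2))
    thus ?thesis ..
  next
    case False
    have "card (selections m cand (refined \<Psi>)) < card (selections m cand \<Psi>)"
      using admissible_pick[OF less.prems]
      by (intro card_selections_block_less) (auto simp: invoked_holes_def)
    then obtain r where "run (refined \<Psi>) r"
      using less.hyps admissible_refined[OF less.prems False] by blast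
    with sat False have "run \<Psi> r" by (rule run_intros(3))
    thus ?thesis ..
  qed
qed

lemma run_returns_equivalent_completion:
  assumes "run \<Psi> r" "admissible \<Psi>"
  shows "\<exists>P''. r = Some P'' \<and> P'' \<in> completions m cand skU skQ \<and>
                prog_equiv updDen qryDen emp P'' P"
  using assms
proof (induction rule: cs_run.induct)
  case (unsat \<Psi>)
  thus ?case unfolding admissible_def by blast
next
  case (found \<Psi>)
  have "candidate \<Psi> \<in> completions m cand skU skQ"
    using admissible_pick(2)[OF found.prems] by (rule decode_in_completions)
  moreover have "prog_equiv updDen qryDen emp (candidate \<Psi>) P"
    using found.hyps(2) verify_exact prog_equiv_sym by metis
  ultimately show ?case by blast
next
  case (refine \<Psi> r)
  show ?case by (rule refine.IH[OF admissible_refined[OF refine.prems refine.hyps(2)]])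
qed

end

theorem mainTheorem2:
  fixes updDen :: "'u \<Rightarrow> 'arg \<Rightarrow> 'db \<Rightarrow> 'db"
    and qryDen :: "'q \<Rightarrow> 'arg \<Rightarrow> 'db \<Rightarrow> 'res"
    and emp :: 'db
    and P :: "('fu, 'fq, 'u, 'q) program"
    and m :: nat
    and owner :: "nat \<Rightarrow> 'fu + 'fq"
    and cand :: "nat \<Rightarrow> 'e list"
    and skU :: "'fu \<Rightarrow> (nat \<Rightarrow> 'e) \<Rightarrow> 'u"
    and skQ :: "'fq \<Rightarrow> (nat \<Rightarrow> 'e) \<Rightarrow> 'q"
    and pick :: "formula \<Rightarrow> valuation"
    and verify :: "('fu, 'fq, 'u, 'q) program \<Rightarrow> ('fu, 'fq, 'u, 'q) program \<Rightarrow> bool"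
    and mfi :: "('fu, 'fq, 'u, 'q) program \<Rightarrow> ('fu, 'fq, 'u, 'q) program \<Rightarrow> ('fu, 'fq, 'arg) invseq"
  assumes local: "sketch_local m owner skU skQ"
    and pick_model: "\<And>\<Psi>. (\<exists>v. \<Psi> v) \<Longrightarrow> \<Psi> (pick \<Psi>)"
    and verify_exact: "\<And>P'. verify P P' \<longleftrightarrow> prog_equiv updDen qryDen emp P P'"
    and mfi_min: "\<And>P'. \<not> prog_equiv updDen qryDen emp P P' \<Longrightarrow>
                     is_min_failing updDen qryDen emp P P' (mfi P P')"
    and exists_equiv: "\<exists>P' \<in> completions m cand skU skQ. prog_equiv updDen qryDen emp P' P"
  shows "(\<exists>r. complete_sketch_returns updDen qryDen emp m owner cand skU skQ pick verify mfi P r) \<and>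
         (\<forall>r. complete_sketch_returns updDen qryDen emp m owner cand skU skQ pick verify mfi P r \<longrightarrow>
              (\<exists>P''. r = Some P'' \<and> P'' \<in> completions m cand skU skQ \<and>
                     prog_equiv updDen qryDen emp P'' P))"
proof -
  from exists_equiv obtain a where a_cand: "\<forall>i<m. a i \<in> set (cand i)"
    and a_equiv: "prog_equiv updDen qryDen emp (fill skU skQ a) P"
    by (auto simp: completions_def)
  interpret realizable_sketch updDen qryDen emp P m owner cand skU skQ pick verify mfi a
    by (rule realizable_sketch.intro) (fact local pick_model verify_exact mfi_min a_cand a_equiv)+
  show ?thesis
    unfolding complete_sketch_returns_def
    using run_exists[OF admissible_psi0] run_returns_equivalent_completion[OF _ admissible_psi0]
    by blast
qed

end
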